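(* Let $S,T>0$ and for $u\in C([0,S])$ define $(\mathcal{A}u)(s)=\int_0^1u(sr)\,dr$, $s\in[0,S]$. Suppose $U,V\in C^1([0,T],C([0,S]))$ satisfy: (i) $U(s,0)\ge V(s,0)$ for all $s\in[0,S]$; (ii) for all $(s,t)\in[0,S]\times[0,T]$, $$\partial_tU+U^2+U=2\mathcal{A}U+F,\qquad \partial_tV+V^2+V=2\mathcal{A}V+G,$$ where $F\ge G$. Then $U\ge V$ everywhere in $[0,S]\times[0,T]$. *)

theory Defs
  imports "HOL-Analysis.Analysis"
begin

definition avg_op :: "(real \<Rightarrow> real) \<Rightarrow> real \<Rightarrow> real" where
  "avg_op u s = integral {0..1} (\<lambda>r. u (s * r))"

text \<open>A function U(s,t) (written U s t), viewed as the map t |-> U(.,t) from [0,T]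
  into C([0,S]) with the sup norm, is C^1 with time derivative Ut:
  U and Ut are (jointly) continuous on [0,S] x [0,T] (equivalently, t |-> U(.,t) and
  t |-> Ut(.,t) are continuous into C([0,S])), and for every t in [0,T] the difference
  quotients converge to Ut(.,t) uniformly in s in [0,S] (one-sided at the endpoints).\<close>
definition C1_into_C :: "real \<Rightarrow> real \<Rightarrow> (real \<Rightarrow> real \<Rightarrow> real) \<Rightarrow> (real \<Rightarrow> real \<Rightarrow> real) \<Rightarrow> bool" where
  "C1_into_C S T U Ut \<longleftrightarrow>
     continuous_on ({0..S} \<times> {0..T}) (\<lambda>(s, t). U s t) \<and>
     continuous_on ({0..S} \<times> {0..T}) (\<lambda>(s, t). Ut s t) \<and>
     (\<forall>t\<in>{0..T}. uniform_limit {0..S} (\<lambda>h s. (U s (t + h) - U s t) / h) (\<lambda>s. Ut s t)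
                     (at 0 within {-t..T - t}))"

end

theory Submission
  imports Defs
begin

text \<open>The difference W = U - V satisfies the linear inequality
  \<open>\<partial>\<^sub>t W + (U + V + 1) W \<ge> 2 \<A> W\<close>, whose zeroth-order coefficient is bounded below, say by -M.
  For \<open>e > 0\<close> consider \<open>Z = W + e exp(K t)\<close> with \<open>K = M + 3\<close>; it is positive at \<open>t = 0\<close>.
  At the first time \<open>t\<^sub>0\<close> at which Z vanishes somewhere, say at \<open>s\<^sub>0\<close>, the left time derivative
  of Z at \<open>(s\<^sub>0, t\<^sub>0)\<close> is nonpositive. On the other hand \<open>W(\<cdot>, t\<^sub>0) \<ge> -e exp(K t\<^sub>0)\<close>, and \<open>\<A>\<close>
  preserves this lower bound since it averages, so the inequality forces that derivative to be at
  least \<open>e exp(K t\<^sub>0) > 0\<close>. Hence \<open>W > -e exp(K t)\<close> for every \<open>e > 0\<close>.\<close>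

lemma continuous_on_prod_fix_snd:
  assumes "continuous_on (A \<times> B) (\<lambda>(x, y). f x y)" "y \<in> B"
  shows "continuous_on A (\<lambda>x. f x y)"
proof -
  have "continuous_on A (\<lambda>x. (\<lambda>(x, y). f x y) (x, y))"
    by (rule continuous_on_compose2[OF assms(1)]) (use assms(2) in \<open>auto intro!: continuous_intros\<close>)
  then show ?thesis by simp
qed

lemma continuous_on_prod_fix_fst:
  assumes "continuous_on (A \<times> B) (\<lambda>(x, y). f x y)" "x \<in> A"
  shows "continuous_on B (\<lambda>y. f x y)"
proof -
  have "continuous_on B (\<lambda>y. (\<lambda>(x, y). f x y) (x, y))"
    by (rule continuous_on_compose2[OF assms(1)]) (use assms(2) in \<open>auto intro!: continuous_intros\<close>)
  then show ?thesis by simp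
qed

lemma first_zero_time:
  fixes Z :: "'a::t2_space \<Rightarrow> real \<Rightarrow> real"
  assumes "compact X"
    and cont: "continuous_on (X \<times> {0..T}) (\<lambda>(x, t). Z x t)"
    and init: "\<And>x. x \<in> X \<Longrightarrow> 0 < Z x 0"
    and "x \<in> X" "t \<in> {0..T}" "Z x t \<le> 0"
  obtains x0 t0 where "x0 \<in> X" "0 < t0" "t0 \<le> T" "Z x0 t0 = 0"
    "\<And>x y. x \<in> X \<Longrightarrow> 0 \<le> y \<Longrightarrow> y < t0 \<Longrightarrow> 0 < Z x y"
    "\<And>x. x \<in> X \<Longrightarrow> 0 \<le> Z x t0"
proof -
  define N where "N = (X \<times> {0..T}) \<inter> (\<lambda>(x, t). Z x t) -` {..0}"
  have "compact N"
    unfolding N_def using \<open>compact X\<close>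
    by (metis Int_absorb Int_assoc closed_atMost compact_Int_closed compact_Icc compact_Times
        compact_imp_closed cont continuous_closed_preimage)
  moreover have "(x, t) \<in> N"
    using assms(4-6) by (simp add: N_def)
  ultimately have "\<exists>p\<in>N. \<forall>q\<in>N. snd p \<le> snd q"
    by (intro continuous_attains_inf continuous_on_snd continuous_on_id) auto
  then obtain p where "p \<in> N" and p_min: "\<And>q. q \<in> N \<Longrightarrow> snd p \<le> snd q"
    by blast
  obtain x0 t0 where p: "p = (x0, t0)" by fastforce
  have x0: "x0 \<in> X" and t0: "0 \<le> t0" "t0 \<le> T" and "Z x0 t0 \<le> 0"
    using \<open>p \<in> N\<close> by (auto simp: N_def p)
  have before: "0 < Z x y" if "x \<in> X" "0 \<le> y" "y < t0" for x y
    using p_min[of "(x, y)"] that t0 by (force simp: N_def p)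
  have at_t0: "0 \<le> Z x t0" if x: "x \<in> X" for x
  proof (rule ccontr)
    assume "\<not> 0 \<le> Z x t0"
    then obtain y where "0 \<le> y" "y \<le> t0" "Z x y = 0"
      using IVT2'[of "Z x" t0 0 0] init[OF x] t0
        continuous_on_subset[OF continuous_on_prod_fix_fst[OF cont x], of "{0..t0}"]
      by auto
    with before[OF x, of y] \<open>\<not> 0 \<le> Z x t0\<close> show False
      by (metis order_le_less less_irrefl)
  qed
  have "0 < t0"
    using init[OF x0] \<open>Z x0 t0 \<le> 0\<close> t0 by (cases "t0 = 0") auto
  with that x0 t0 before at_t0 \<open>Z x0 t0 \<le> 0\<close> show thesis
    by (meson order_antisym)
qed

lemma has_real_derivative_nonpos_at_left_min:
  fixes f :: "real \<Rightarrow> real"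
  assumes deriv: "(f has_real_derivative D) (at t within {a..b})"
    and "a < t" "t \<le> b"
    and left_min: "\<And>y. a \<le> y \<Longrightarrow> y < t \<Longrightarrow> f t \<le> f y"
  shows "D \<le> 0"
proof -
  have "(f has_real_derivative D) (at t within {a..<t})"
    using deriv by (rule has_field_derivative_subset) (use assms in auto)
  then have "((\<lambda>y. (f y - f t) / (y - t)) \<longlongrightarrow> D) (at t within {a..<t})"
    by (simp add: has_field_derivative_iff)
  moreover have "\<forall>\<^sub>F y in at t within {a..<t}. (f y - f t) / (y - t) \<le> 0"
    using left_min by (auto simp: eventually_at_filter divide_nonneg_neg intro!: always_eventually)
  moreover have "at t within {a..<t} \<noteq> bot"
    using \<open>a < t\<close> by (simp add: trivial_limit_within)
  ultimately show ?thesis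
    by (rule tendsto_upperbound)
qed

lemma mult_unit_interval_mem:
  fixes s r :: real
  shows "s \<in> {0..S} \<Longrightarrow> r \<in> {0..1} \<Longrightarrow> s * r \<in> {0..S}"
  by (auto intro: order_trans[OF mult_left_le])

lemma avg_op_integrable:
  fixes u :: "real \<Rightarrow> real"
  assumes "continuous_on {0..S} u" "s \<in> {0..S}"
  shows "(\<lambda>r. u (s * r)) integrable_on {0..1}"
proof (rule integrable_continuous_real, rule continuous_on_compose2[OF assms(1), of _ "\<lambda>r. s * r"])
  show "(\<lambda>r. s * r) ` {0..1} \<subseteq> {0..S}"
    using assms(2) by (auto intro: mult_unit_interval_mem)
qed (auto intro: continuous_intros)

lemma avg_op_diff:
  assumes "continuous_on {0..S} u" "continuous_on {0..S} v" "s \<in> {0..S}"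
  shows "avg_op (\<lambda>x. u x - v x) s = avg_op u s - avg_op v s"
  unfolding avg_op_def
  using integral_diff[OF avg_op_integrable[OF assms(1,3)] avg_op_integrable[OF assms(2,3)]] .

lemma avg_op_ge_const:
  assumes "continuous_on {0..S} u" "s \<in> {0..S}" "\<And>x. x \<in> {0..S} \<Longrightarrow> c \<le> u x"
  shows "c \<le> avg_op u s"
proof -
  have "integral {0..1} (\<lambda>_::real. c) \<le> avg_op u s"
    unfolding avg_op_def
  proof (rule Henstock_Kurzweil_Integration.integral_le)
    show "c \<le> u (s * r)" if "r \<in> {0..1}" for r
      using assms(2) that by (intro assms(3) mult_unit_interval_mem)
  qed (auto intro: avg_op_integrable assms)
  then show ?thesis by simp
qed

lemma C1_into_C_continuous:
  "C1_into_C S T U Ut \<Longrightarrow> continuous_on ({0..S} \<times> {0..T}) (\<lambda>(s, t). U s t)"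
  by (simp add: C1_into_C_def)

lemma C1_into_C_has_real_derivative:
  assumes "C1_into_C S T U Ut" "s \<in> {0..S}" "t \<in> {0..T}"
  shows "((\<lambda>y. U s y) has_real_derivative Ut s t) (at t within {0..T})"
proof -
  have "uniform_limit {0..S} (\<lambda>h s. (U s (t + h) - U s t) / h) (\<lambda>s. Ut s t)
      (at 0 within {-t..T - t})"
    using assms(1,3) by (simp add: C1_into_C_def)
  from tendsto_uniform_limitI[OF this assms(2)]
  have "((\<lambda>h. U s (t + h)) has_real_derivative Ut s t) (at 0 within {-t..T - t})"
    by (simp add: has_field_derivative_iff)
  moreover have "(+) t ` {-t..T - t} = {0..T}"
    by simp
  ultimately show ?thesis
    using DERIV_at_within_shift[of "U s" "Ut s t" t 0 "{-t..T - t}"] by simp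
qed

lemma C1_into_C_bounded:
  assumes "C1_into_C S T U Ut"
  obtains B where "\<And>s t. s \<in> {0..S} \<Longrightarrow> t \<in> {0..T} \<Longrightarrow> \<bar>U s t\<bar> \<le> B"
proof -
  have "compact ((\<lambda>(s, t). U s t) ` ({0..S} \<times> {0..T}))"
    using C1_into_C_continuous[OF assms] by (intro compact_continuous_image compact_Times compact_Icc)
  then obtain B where "\<forall>x \<in> (\<lambda>(s, t). U s t) ` ({0..S} \<times> {0..T}). \<bar>x\<bar> \<le> B"
    by (meson bounded_real compact_imp_bounded)
  then show thesis
    by (intro that[of B]) auto
qed

context
  fixes S T c M :: real and W Wt b :: "real \<Rightarrow> real \<Rightarrow> real"
  assumes cont: "continuous_on ({0..S} \<times> {0..T}) (\<lambda>(s, t). W s t)"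
    and deriv: "\<And>s t. s \<in> {0..S} \<Longrightarrow> t \<in> {0..T} \<Longrightarrow>
      ((\<lambda>y. W s y) has_real_derivative Wt s t) (at t within {0..T})"
    and init: "\<And>s. s \<in> {0..S} \<Longrightarrow> 0 \<le> W s 0"
    and ineq: "\<And>s t. s \<in> {0..S} \<Longrightarrow> t \<in> {0..T} \<Longrightarrow>
      c * avg_op (\<lambda>x. W x t) s \<le> Wt s t + b s t * W s t"
    and c_nonneg: "0 \<le> c"
    and b_lower: "\<And>s t. s \<in> {0..S} \<Longrightarrow> t \<in> {0..T} \<Longrightarrow> - M \<le> b s t"
begin

lemma avg_op_comparison_perturbed:
  assumes "0 < e" "s \<in> {0..S}" "t \<in> {0..T}"
  shows "0 < W s t + e * exp ((c + M + 1) * t)"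
proof (rule ccontr)
  define K where "K = c + M + 1"
  define Z where "Z x y = W x y + e * exp (K * y)" for x y
  assume "\<not> 0 < W s t + e * exp ((c + M + 1) * t)"
  then have "Z s t \<le> 0"
    by (simp add: Z_def K_def)
  moreover have "continuous_on ({0..S} \<times> {0..T}) (\<lambda>(x, y). Z x y)"
    using cont unfolding Z_def case_prod_beta' by (intro continuous_intros)
  moreover have "0 < Z x 0" if "x \<in> {0..S}" for x
    using init[OF that] \<open>0 < e\<close> by (simp add: Z_def)
  ultimately obtain x0 t0 where x0: "x0 \<in> {0..S}" and t0: "0 < t0" "t0 \<le> T"
    and touch: "Z x0 t0 = 0"
    and before: "\<And>x y. x \<in> {0..S} \<Longrightarrow> 0 \<le> y \<Longrightarrow> y < t0 \<Longrightarrow> 0 < Z x y"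
    and at_t0: "\<And>x. x \<in> {0..S} \<Longrightarrow> 0 \<le> Z x t0"
    using first_zero_time[of "{0..S}" T Z s t] assms(2,3) by blast
  define E where "E = e * exp (K * t0)"
  have "0 < E"
    using \<open>0 < e\<close> by (simp add: E_def)
  have "((\<lambda>y. Z x0 y) has_real_derivative Wt x0 t0 + K * E) (at t0 within {0..T})"
    unfolding Z_def E_def using x0 t0
    by (auto intro!: derivative_eq_intros deriv)
  then have Zt_nonpos: "Wt x0 t0 + K * E \<le> 0"
    by (rule has_real_derivative_nonpos_at_left_min)
      (use t0 touch before x0 in \<open>auto simp: less_imp_le\<close>)
  have "continuous_on {0..S} (\<lambda>x. W x t0)"
    by (rule continuous_on_prod_fix_snd[OF cont]) (use t0 in auto)
  then have "- E \<le> avg_op (\<lambda>x. W x t0) x0"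
  proof (rule avg_op_ge_const[OF _ x0])
    show "- E \<le> W x t0" if "x \<in> {0..S}" for x
      using at_t0[OF that] by (simp add: Z_def E_def)
  qed
  then have "- c * E \<le> c * avg_op (\<lambda>x. W x t0) x0"
    using mult_left_mono c_nonneg by fastforce
  moreover have "W x0 t0 = - E"
    using touch by (simp add: Z_def E_def)
  moreover have "- M * E \<le> b x0 t0 * E"
    using mult_right_mono[OF b_lower[OF x0, of t0], of E] t0 \<open>0 < E\<close> by simp
  moreover have "c * avg_op (\<lambda>x. W x t0) x0 \<le> Wt x0 t0 + b x0 t0 * W x0 t0"
    using ineq x0 t0 by simp
  ultimately have "E \<le> Wt x0 t0 + K * E"
    by (simp add: K_def algebra_simps)
  with Zt_nonpos \<open>0 < E\<close> show False
    by linarith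
qed

lemma avg_op_comparison_nonneg:
  assumes "s \<in> {0..S}" "t \<in> {0..T}"
  shows "0 \<le> W s t"
proof (rule ccontr)
  define e where "e = - W s t / (2 * exp ((c + M + 1) * t))"
  assume "\<not> 0 \<le> W s t"
  then have "0 < e"
    by (simp add: e_def divide_neg_pos)
  from avg_op_comparison_perturbed[OF this assms] \<open>\<not> 0 \<le> W s t\<close> show False
    by (simp add: e_def)
qed

end

lemma linearized_difference_le:
  fixes ut u au f vt v av g :: real
  assumes "ut + u\<^sup>2 + u = 2 * au + f" "vt + v\<^sup>2 + v = 2 * av + g" "g \<le> f"
  shows "2 * (au - av) \<le> ut - vt + (u + v + 1) * (u - v)"
proof -
  have "ut - vt + (u + v + 1) * (u - v) = 2 * (au - av) + (f - g)"
    using assms(1,2) by (simp add: algebra_simps power2_eq_square)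
  with assms(3) show ?thesis
    by linarith
qed

theorem proposition6p1:
  fixes S T :: real and U V Ut Vt F G :: "real \<Rightarrow> real \<Rightarrow> real"
  assumes "S > 0" and "T > 0"
    and "C1_into_C S T U Ut" and "C1_into_C S T V Vt"
    and "\<forall>s\<in>{0..S}. U s 0 \<ge> V s 0"
    and "\<forall>s\<in>{0..S}. \<forall>t\<in>{0..T}.
           Ut s t + (U s t)\<^sup>2 + U s t = 2 * avg_op (\<lambda>x. U x t) s + F s t"
    and "\<forall>s\<in>{0..S}. \<forall>t\<in>{0..T}.
           Vt s t + (V s t)\<^sup>2 + V s t = 2 * avg_op (\<lambda>x. V x t) s + G s t"
    and "\<forall>s\<in>{0..S}. \<forall>t\<in>{0..T}. F s t \<ge> G s t"
  shows "\<forall>s\<in>{0..S}. \<forall>t\<in>{0..T}. U s t \<ge> V s t"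
proof (intro ballI)
  fix s t assume st: "s \<in> {0..S}" "t \<in> {0..T}"
  obtain BU where BU: "\<And>s t. s \<in> {0..S} \<Longrightarrow> t \<in> {0..T} \<Longrightarrow> \<bar>U s t\<bar> \<le> BU"
    using C1_into_C_bounded[OF assms(3)] by blast
  obtain BV where BV: "\<And>s t. s \<in> {0..S} \<Longrightarrow> t \<in> {0..T} \<Longrightarrow> \<bar>V s t\<bar> \<le> BV"
    using C1_into_C_bounded[OF assms(4)] by blast
  note contU = C1_into_C_continuous[OF assms(3)] and contV = C1_into_C_continuous[OF assms(4)]
  have "0 \<le> U s t - V s t"
  proof (rule avg_op_comparison_nonneg[where S = S and T = T and W = "\<lambda>s t. U s t - V s t"
        and Wt = "\<lambda>s t. Ut s t - Vt s t" and b = "\<lambda>s t. U s t + V s t + 1"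
        and c = 2 and M = "BU + BV - 1"])
    show "continuous_on ({0..S} \<times> {0..T}) (\<lambda>(s, t). U s t - V s t)"
      using continuous_on_diff[OF contU contV] by (simp add: case_prod_beta')
    show "((\<lambda>y. U s y - V s y) has_real_derivative Ut s t - Vt s t) (at t within {0..T})"
      if "s \<in> {0..S}" "t \<in> {0..T}" for s t
      using C1_into_C_has_real_derivative[OF assms(3) that]
        C1_into_C_has_real_derivative[OF assms(4) that]
      by (rule DERIV_diff)
    show "2 * avg_op (\<lambda>x. U x t - V x t) s
        \<le> Ut s t - Vt s t + (U s t + V s t + 1) * (U s t - V s t)"
      if "s \<in> {0..S}" "t \<in> {0..T}" for s t
      using avg_op_diff[OF continuous_on_prod_fix_snd[OF contU that(2)]
          continuous_on_prod_fix_snd[OF contV that(2)] that(1)]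
        linearized_difference_le[of "Ut s t" "U s t" "avg_op (\<lambda>x. U x t) s" "F s t"
          "Vt s t" "V s t" "avg_op (\<lambda>x. V x t) s" "G s t"] assms(6-8) that
      by simp
    show "- (BU + BV - 1) \<le> U s t + V s t + 1"
      if "s \<in> {0..S}" "t \<in> {0..T}" for s t
      using BU[OF that] BV[OF that] by linarith
  qed (use assms(5) st in auto)
  then show "V s t \<le> U s t"
    by simp
qed

end
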